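(* Let $n\ge1$, $d=2^n$. For all unitaries $U,V\in\mathcal{U}(d)$, $$|\mathcal{M}_{lin}(U)-\mathcal{M}_{lin}(V)|\le\frac{8d}{4+d}\,\|U-V\|_2,$$ where $\|\cdot\|_2$ is the Frobenius norm; in particular $\mathcal{M}_{lin}$ is Lipschitz on $\mathcal{U}(d)$ with a constant bounded independently of $d$.
   Context: $\mathcal{P}_n$ is the set of the $4^n$ $n$-qubit Pauli strings $\sigma_1\otimes\cdots\otimes\sigma_n$, $\sigma_i\in\{I,X,Y,Z\}$. For a pure state, $M_{lin}(|\psi\rangle)=1-d^{-1}\sum_{P\in\mathcal{P}_n}\langle\psi|P|\psi\rangle^4$. $\mathrm{STAB}$ is the finite set of $n$-qubit pure stabilizer states (states $C|0\rangle^{\otimes n}$ with $C$ a Clifford unitary, i.e. $CPC^\dagger\in\{\pm1,\pm i\}\mathcal{P}_n$ for all $P$). $\mathcal{M}_{lin}(U)=\frac{1}{|\mathrm{STAB}|}\sum_{|\psi\rangle\in\mathrm{STAB}}M_{lin}(U|\psi\rangle)$. *)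

theory Defs
  imports Complex_Main "Jordan_Normal_Form.Matrix"
begin

definition dagger :: "complex mat \<Rightarrow> complex mat" where
  "dagger A = mat (dim_col A) (dim_row A) (\<lambda>(i,j). cnj (A $$ (j,i)))"

definition unitary_mat :: "nat \<Rightarrow> complex mat \<Rightarrow> bool" where
  "unitary_mat d U \<longleftrightarrow> U \<in> carrier_mat d d \<and> U * dagger U = 1\<^sub>m d"

definition kron :: "complex mat \<Rightarrow> complex mat \<Rightarrow> complex mat" where
  "kron A B = mat (dim_row A * dim_row B) (dim_col A * dim_col B)
     (\<lambda>(i,j). A $$ (i div dim_row B, j div dim_col B) * B $$ (i mod dim_row B, j mod dim_col B))"

text \<open>Single-qubit Paulis: 0 = I, 1 = X, 2 = Y, 3 = Z.\<close>
definition pauli :: "nat \<Rightarrow> complex mat" where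
  "pauli k = (if k = 0 then mat_of_rows_list 2 [[1,0],[0,1]]
      else if k = 1 then mat_of_rows_list 2 [[0,1],[1,0]]
      else if k = 2 then mat_of_rows_list 2 [[0,-\<i>],[\<i>,0]]
      else mat_of_rows_list 2 [[1,0],[0,-1]])"

definition pauli_string :: "nat list \<Rightarrow> complex mat" where
  "pauli_string xs = foldr (\<lambda>a M. kron (pauli a) M) xs (1\<^sub>m 1)"

definition paulis :: "nat \<Rightarrow> complex mat set" where
  "paulis n = {pauli_string xs | xs. length xs = n \<and> set xs \<subseteq> {0..<4}}"

definition clifford :: "nat \<Rightarrow> complex mat \<Rightarrow> bool" where
  "clifford n C \<longleftrightarrow> unitary_mat (2^n) C \<and>
     (\<forall>P\<in>paulis n. \<exists>c\<in>{1, -1, \<i>, -\<i>}. \<exists>Q\<in>paulis n. C * P * dagger C = c \<cdot>\<^sub>m Q)"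

definition zero_proj :: "nat \<Rightarrow> complex mat" where
  "zero_proj n = mat (2^n) (2^n) (\<lambda>(i,j). if i = 0 \<and> j = 0 then 1 else 0)"

text \<open>Stabilizer states, represented by their (phase-free) projectors \<open>|\<psi>\<rangle>\<langle>\<psi>|\<close>,
  \<open>|\<psi>\<rangle> = C|0\<rangle>^{\<otimes>n}\<close> with \<open>C\<close> Clifford.\<close>
definition STAB :: "nat \<Rightarrow> complex mat set" where
  "STAB n = {C * zero_proj n * dagger C | C. clifford n C}"

definition mtrace :: "complex mat \<Rightarrow> complex" where
  "mtrace A = (\<Sum>i<dim_row A. A $$ (i,i))"

text \<open>Linear stabilizer entropy of the pure state with projector \<open>\<rho>\<close>;
  \<open>\<langle>\<psi>|P|\<psi>\<rangle> = tr(P\<rho>)\<close> (real, as P is Hermitian).\<close>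
definition M_lin_state :: "nat \<Rightarrow> complex mat \<Rightarrow> real" where
  "M_lin_state n \<rho> = 1 - (1 / 2^n) * (\<Sum>P\<in>paulis n. (Re (mtrace (P * \<rho>)))^4)"

definition M_lin :: "nat \<Rightarrow> complex mat \<Rightarrow> real" where
  "M_lin n U = (\<Sum>\<rho>\<in>STAB n. M_lin_state n (U * \<rho> * dagger U)) / real (card (STAB n))"

definition frob_norm :: "complex mat \<Rightarrow> real" where
  "frob_norm A = sqrt (\<Sum>i<dim_row A. \<Sum>j<dim_col A. (cmod (A $$ (i,j)))^2)"

end

theory Submission
  imports Defs "HOL-Analysis.L2_Norm" "HOL-Analysis.Convex" "Jordan_Normal_Form.Determinant"
begin

(* A pure state psi of n qubits, d = 2^n, has the real Pauli spectrum a_P = <psi|P|psi> with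
   |a_P| <= 1, a_I = 1 and sum_P a_P^2 = d; for a second state phi with spectrum b_P the
   completeness relation for Pauli strings gives sum_P a_P b_P = d |<psi|phi>|^2, hence
   sum_P (a_P - b_P)^2 = 2d (1 - |<psi|phi>|^2) <= 2d |psi - phi|^2.
   Writing a^4 - b^4 = (a - b)(a + b)(a^2 + b^2 - 1) + (a^2 - b^2), the last term sums to zero,
   the identity term vanishes, and Cauchy-Schwarz together with
   (a + b)^2 (a^2 + b^2 - 1)^2 <= 2 (a^2 + b^2) gives
   |sum_P a_P^4 - sum_P b_P^4| <= sqrt (8 d (d - 1)) |psi - phi|.
   With psi = U s and phi = V s for a stabilizer state s, this bounds the difference of the
   linear stabilizer entropies of the two states by
   sqrt (8 (d - 1) / d) |U - V|_2 <= 8d / (4 + d) |U - V|_2,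
   and averaging over the stabilizer states preserves the bound. *)

section \<open>Vectors and matrices\<close>

(* Vectors of C^d are functions nat => complex, of which only the entries below d matter. *)
definition mat_app :: "nat \<Rightarrow> complex mat \<Rightarrow> (nat \<Rightarrow> complex) \<Rightarrow> nat \<Rightarrow> complex" where
  "mat_app d M x i = (\<Sum>k<d. M $$ (i,k) * x k)"

definition cinner :: "nat \<Rightarrow> (nat \<Rightarrow> complex) \<Rightarrow> (nat \<Rightarrow> complex) \<Rightarrow> complex" where
  "cinner d x y = (\<Sum>i<d. cnj (x i) * y i)"

definition vnorm :: "nat \<Rightarrow> (nat \<Rightarrow> complex) \<Rightarrow> real" where
  "vnorm d x = L2_set (\<lambda>i. cmod (x i)) {..<d}"

definition orthonormal_cols :: "nat \<Rightarrow> complex mat \<Rightarrow> bool" where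
  "orthonormal_cols d M \<longleftrightarrow>
     (\<forall>k<d. \<forall>l<d. (\<Sum>i<d. cnj (M $$ (i,k)) * M $$ (i,l)) = (if k = l then 1 else 0))"

definition proj :: "nat \<Rightarrow> (nat \<Rightarrow> complex) \<Rightarrow> complex mat" where
  "proj d x = mat d d (\<lambda>(i,j). x i * cnj (x j))"

definition expval :: "nat \<Rightarrow> complex mat \<Rightarrow> (nat \<Rightarrow> complex) \<Rightarrow> complex" where
  "expval d P x = cinner d x (mat_app d P x)"

lemma vnorm_nonneg: "0 \<le> vnorm d x"
  by (simp add: vnorm_def)

lemma vnorm_sq: "(vnorm d x)\<^sup>2 = (\<Sum>i<d. (cmod (x i))\<^sup>2)"
  by (simp add: vnorm_def L2_set_def sum_nonneg)

lemma cinner_self: "cinner d x x = of_real ((vnorm d x)\<^sup>2)"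
  unfolding vnorm_sq cinner_def of_real_sum
  by (intro sum.cong refl) (metis complex_norm_square mult.commute)

lemma cnj_cinner: "cnj (cinner d x y) = cinner d y x"
  by (simp add: cinner_def mult.commute)

lemma cmod_cinner_le: "cmod (cinner d x y) \<le> vnorm d x * vnorm d y"
proof -
  have "cmod (cinner d x y) \<le> (\<Sum>i<d. \<bar>cmod (x i)\<bar> * \<bar>cmod (y i)\<bar>)"
    unfolding cinner_def by (rule order_trans[OF norm_sum]) (simp add: norm_mult)
  also have "\<dots> \<le> vnorm d x * vnorm d y"
    unfolding vnorm_def by (rule L2_set_mult_ineq)
  finally show ?thesis .
qed

lemma cinner_mat_app:
  assumes "orthonormal_cols d M"
  shows "cinner d (mat_app d M x) (mat_app d M y) = cinner d x y"
proof -
  let ?f = "\<lambda>i l k. cnj (x k) * y l * (cnj (M $$ (i,k)) * M $$ (i,l))"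
  have "cinner d (mat_app d M x) (mat_app d M y) = (\<Sum>i<d. \<Sum>l<d. \<Sum>k<d. ?f i l k)"
    by (simp add: cinner_def mat_app_def sum_product mult_ac)
  also have "\<dots> = (\<Sum>l<d. \<Sum>i<d. \<Sum>k<d. ?f i l k)"
    by (rule sum.swap)
  also have "\<dots> = (\<Sum>l<d. \<Sum>k<d. \<Sum>i<d. ?f i l k)"
    by (intro sum.cong refl sum.swap)
  also have "\<dots> = (\<Sum>l<d. \<Sum>k<d. cnj (x k) * y l * (if k = l then 1 else 0))"
    using assms by (intro sum.cong refl) (simp add: orthonormal_cols_def flip: sum_distrib_left)
  also have "\<dots> = cinner d x y"
    by (simp add: cinner_def if_distrib cong: if_cong)
  finally show ?thesis .
qed

lemma vnorm_mat_app:
  assumes "orthonormal_cols d M"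
  shows "vnorm d (mat_app d M x) = vnorm d x"
proof -
  have "(vnorm d (mat_app d M x))\<^sup>2 = (vnorm d x)\<^sup>2"
    using cinner_mat_app[OF assms, of x x] by (metis cinner_self of_real_eq_iff)
  then show ?thesis
    by (simp add: vnorm_nonneg)
qed

lemma unitary_mat_orthonormal_cols:
  assumes "unitary_mat d U"
  shows "orthonormal_cols d U"
  unfolding orthonormal_cols_def
proof (intro allI impI)
  fix k l assume kl: "k < d" "l < d"
  have U: "U \<in> carrier_mat d d" using assms by (simp add: unitary_mat_def)
  have U': "dagger U \<in> carrier_mat d d" using U by (simp add: dagger_def)
  have "dagger U * U = 1\<^sub>m d"
    by (rule mat_mult_left_right_inverse[OF U U']) (use assms in \<open>simp add: unitary_mat_def\<close>)
  then have "(dagger U * U) $$ (k,l) = (if k = l then 1 else 0)"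
    using kl by simp
  moreover have "(dagger U * U) $$ (k,l) = (\<Sum>i<d. cnj (U $$ (i,k)) * U $$ (i,l))"
    using U kl by (simp add: dagger_def scalar_prod_def lessThan_atLeast0)
  ultimately show "(\<Sum>i<d. cnj (U $$ (i,k)) * U $$ (i,l)) = (if k = l then 1 else 0)"
    by simp
qed

lemma vnorm_diff_sq:
  "(vnorm d (x - y))\<^sup>2 = (vnorm d x)\<^sup>2 + (vnorm d y)\<^sup>2 - 2 * Re (cinner d x y)"
proof -
  have "(cmod (a - b))\<^sup>2 = (cmod a)\<^sup>2 + (cmod b)\<^sup>2 - 2 * Re (cnj a * b)" for a b :: complex
    unfolding cmod_power2 by (simp add: power2_eq_square algebra_simps)
  then show ?thesis
    by (simp add: vnorm_sq cinner_def sum.distrib sum_subtractf sum_distrib_left Re_sum)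
qed

lemma one_minus_cmod_cinner_sq_le:
  assumes "vnorm d x = 1" "vnorm d y = 1"
  shows "1 - (cmod (cinner d x y))\<^sup>2 \<le> (vnorm d (x - y))\<^sup>2"
proof -
  have "(vnorm d (x - y))\<^sup>2 = 2 - 2 * Re (cinner d x y)"
    using assms by (simp add: vnorm_diff_sq)
  moreover have "Re (cinner d x y) \<le> cmod (cinner d x y)"
    by (rule complex_Re_le_cmod)
  moreover have "0 \<le> (1 - cmod (cinner d x y))\<^sup>2"
    by simp
  ultimately show ?thesis
    by (simp add: power2_eq_square algebra_simps)
qed

lemma frob_norm_nonneg: "0 \<le> frob_norm A"
  unfolding frob_norm_def by (intro real_sqrt_ge_zero sum_nonneg) auto

lemma vnorm_mat_app_le_frob_norm:
  assumes "M \<in> carrier_mat d d"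
  shows "vnorm d (mat_app d M x) \<le> frob_norm M * vnorm d x"
proof -
  define row_norm where "row_norm i = L2_set (\<lambda>k. cmod (M $$ (i,k))) {..<d}" for i
  have row: "cmod (mat_app d M x i) \<le> row_norm i * vnorm d x" for i
  proof -
    have "cmod (mat_app d M x i) \<le> (\<Sum>k<d. \<bar>cmod (M $$ (i,k))\<bar> * \<bar>cmod (x k)\<bar>)"
      unfolding mat_app_def by (rule order_trans[OF norm_sum]) (simp add: norm_mult)
    also have "\<dots> \<le> row_norm i * vnorm d x"
      unfolding row_norm_def vnorm_def by (rule L2_set_mult_ineq)
    finally show ?thesis .
  qed
  have frob: "(frob_norm M)\<^sup>2 = (\<Sum>i<d. (row_norm i)\<^sup>2)"
    using assms by (simp add: frob_norm_def row_norm_def L2_set_def sum_nonneg)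
  have "(vnorm d (mat_app d M x))\<^sup>2 \<le> (\<Sum>i<d. (row_norm i * vnorm d x)\<^sup>2)"
    unfolding vnorm_sq using row by (intro sum_mono power_mono) auto
  also have "\<dots> = (frob_norm M * vnorm d x)\<^sup>2"
    by (simp add: frob power_mult_distrib sum_distrib_right)
  finally show ?thesis
    by (rule power2_le_imp_le) (simp add: frob_norm_nonneg vnorm_nonneg)
qed

lemma vnorm_mat_app_diff_le_frob_norm:
  assumes "M \<in> carrier_mat d d" "N \<in> carrier_mat d d"
  shows "vnorm d (mat_app d M x - mat_app d N x) \<le> frob_norm (M - N) * vnorm d x"
proof -
  have "mat_app d (M - N) x i = mat_app d M x i - mat_app d N x i" if "i < d" for i
  proof -
    have "mat_app d (M - N) x i = (\<Sum>k<d. M $$ (i,k) * x k - N $$ (i,k) * x k)"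
      unfolding mat_app_def using assms that by (intro sum.cong refl) (simp add: left_diff_distrib)
    then show ?thesis
      by (simp add: mat_app_def sum_subtractf)
  qed
  then have "vnorm d (mat_app d M x - mat_app d N x) = vnorm d (mat_app d (M - N) x)"
    unfolding vnorm_def by (intro L2_set_cong) auto
  also have "\<dots> \<le> frob_norm (M - N) * vnorm d x"
    using assms(2) by (intro vnorm_mat_app_le_frob_norm minus_carrier_mat)
  finally show ?thesis .
qed

lemma conj_proj:
  assumes "U \<in> carrier_mat d d"
  shows "U * proj d x * dagger U = proj d (mat_app d U x)"
proof (rule eq_matI)
  fix i j assume "i < dim_row (proj d (mat_app d U x))" "j < dim_col (proj d (mat_app d U x))"
  then have "i < d" "j < d" by (simp_all add: proj_def)
  have row: "(U * proj d x) $$ (i,l) = mat_app d U x i * cnj (x l)" if "l < d" for l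
    using assms \<open>i < d\<close> that
    by (simp add: proj_def mat_app_def scalar_prod_def lessThan_atLeast0 sum_distrib_right mult.assoc)
  have "(U * proj d x * dagger U) $$ (i,j) = (\<Sum>l<d. (U * proj d x) $$ (i,l) * cnj (U $$ (j,l)))"
    using assms \<open>i < d\<close> \<open>j < d\<close> by (simp add: dagger_def scalar_prod_def lessThan_atLeast0 proj_def)
  also have "\<dots> = mat_app d U x i * cnj (mat_app d U x j)"
    by (simp add: row mat_app_def sum_distrib_left mult_ac)
  finally show "(U * proj d x * dagger U) $$ (i,j) = proj d (mat_app d U x) $$ (i,j)"
    using \<open>i < d\<close> \<open>j < d\<close> by (simp add: proj_def)
qed (use assms in \<open>simp_all add: proj_def dagger_def\<close>)

lemma mtrace_mult_proj:
  assumes "P \<in> carrier_mat d d"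
  shows "mtrace (P * proj d x) = expval d P x"
proof -
  have "mtrace (P * proj d x) = (\<Sum>i<d. \<Sum>j<d. P $$ (i,j) * (x j * cnj (x i)))"
    using assms by (simp add: mtrace_def proj_def scalar_prod_def lessThan_atLeast0)
  also have "\<dots> = expval d P x"
    by (simp add: expval_def cinner_def mat_app_def sum_distrib_left mult_ac)
  finally show ?thesis .
qed

lemma expval_eq_sum: "expval d P x = (\<Sum>i<d. \<Sum>j<d. cnj (x i) * P $$ (i,j) * x j)"
  by (simp add: expval_def cinner_def mat_app_def sum_distrib_left mult.assoc)

lemma cnj_expval:
  assumes "\<And>i j. i < d \<Longrightarrow> j < d \<Longrightarrow> cnj (P $$ (j,i)) = P $$ (i,j)"
  shows "cnj (expval d P x) = expval d P x"
proof -
  have "cnj (expval d P x) = (\<Sum>i<d. \<Sum>j<d. cnj (x j) * P $$ (j,i) * x i)"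
    unfolding expval_eq_sum cnj_sum by (intro sum.cong refl) (simp add: assms mult_ac)
  also have "\<dots> = expval d P x"
    unfolding expval_eq_sum by (rule sum.swap)
  finally show ?thesis .
qed

lemma cmod_expval_le:
  assumes "orthonormal_cols d P" "vnorm d x = 1"
  shows "cmod (expval d P x) \<le> 1"
  using cmod_cinner_le[of d x "mat_app d P x"] assms
  by (simp add: expval_def vnorm_mat_app)

section \<open>Pauli strings\<close>

lemma dim_pauli [simp]: "dim_row (pauli a) = 2" "dim_col (pauli a) = 2"
  by (simp_all add: pauli_def mat_of_rows_list_def)

lemma sum_lessThan_2: "(\<Sum>i<2::nat. f i) = f 0 + (f 1 :: 'a::comm_monoid_add)"
  by (simp add: eval_nat_numeral)

lemma sum_lessThan_4: "(\<Sum>i<4::nat. f i) = f 0 + f 1 + f 2 + (f 3 :: 'a::comm_monoid_add)"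
  by (simp add: eval_nat_numeral add.assoc)

lemma pauli_hermitian: "i < 2 \<Longrightarrow> j < 2 \<Longrightarrow> cnj (pauli a $$ (j,i)) = pauli a $$ (i,j)"
  by (auto simp: pauli_def mat_of_rows_list_def less_2_cases_iff)

lemma pauli_involutive:
  "i < 2 \<Longrightarrow> j < 2 \<Longrightarrow> (\<Sum>q<2. pauli a $$ (i,q) * pauli a $$ (q,j)) = (if i = j then 1 else 0)"
  by (auto simp: pauli_def mat_of_rows_list_def less_2_cases_iff sum_lessThan_2)

lemma pauli_0_index: "i < 2 \<Longrightarrow> j < 2 \<Longrightarrow> pauli 0 $$ (i,j) = (if i = j then 1 else 0)"
  by (auto simp: pauli_def mat_of_rows_list_def less_2_cases_iff)

lemma pauli_completeness:
  "i < 2 \<Longrightarrow> j < 2 \<Longrightarrow> k < 2 \<Longrightarrow> l < 2 \<Longrightarrow>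
   (\<Sum>a<4. pauli a $$ (i,j) * pauli a $$ (k,l)) = (if i = l \<and> j = k then 2 else 0)"
  by (auto simp: pauli_def mat_of_rows_list_def less_2_cases_iff sum_lessThan_4)

lemma pauli_trace_orthogonal:
  "a < 4 \<Longrightarrow> b < 4 \<Longrightarrow> (\<Sum>p<2. \<Sum>q<2. pauli a $$ (q,p) * pauli b $$ (p,q)) = (if a = b then 2 else 0)"
  by (auto simp: pauli_def mat_of_rows_list_def sum_lessThan_2 eval_nat_numeral less_Suc_eq)

lemma sum_lessThan_mult:
  fixes m :: nat
  shows "(\<Sum>i<k * m. f i) = (\<Sum>p<k. \<Sum>r<m. f (p * m + r))"
proof -
  have "bij_betw (\<lambda>(p,r). p * m + r) ({..<k} \<times> {..<m}) {..<k * m}"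
  proof (rule bij_betwI[where g = "\<lambda>i. (i div m, i mod m)"])
    show "(\<lambda>(p,r). p * m + r) \<in> {..<k} \<times> {..<m} \<rightarrow> {..<k * m}"
    proof
      fix x assume "x \<in> {..<k} \<times> {..<m}"
      then obtain p r where "x = (p, r)" "p < k" "r < m" by auto
      moreover have "p * m + r < (p + 1) * m" using \<open>r < m\<close> by simp
      moreover have "(p + 1) * m \<le> k * m" using \<open>p < k\<close> by (intro mult_right_mono) auto
      ultimately show "(\<lambda>(p,r). p * m + r) x \<in> {..<k * m}" by auto
    qed
    show "(\<lambda>i. (i div m, i mod m)) \<in> {..<k * m} \<rightarrow> {..<k} \<times> {..<m}"
      by (cases "m = 0") (auto simp: less_mult_imp_div_less)
  qed auto
  then have "(\<Sum>i<k * m. f i) = (\<Sum>x\<in>{..<k} \<times> {..<m}. f ((\<lambda>(p,r). p * m + r) x))"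
    by (rule sum.reindex_bij_betw[symmetric])
  also have "\<dots> = (\<Sum>p<k. \<Sum>r<m. f (p * m + r))"
    by (simp add: sum.cartesian_product split_def)
  finally show ?thesis .
qed

lemma sum_interleaved_product:
  fixes f :: "'a \<Rightarrow> 'a \<Rightarrow> 'c::semiring_0" and g :: "'b \<Rightarrow> 'b \<Rightarrow> 'c"
  shows "(\<Sum>p\<in>A. \<Sum>r\<in>B. \<Sum>q\<in>A. \<Sum>s\<in>B. f p q * g r s)
    = (\<Sum>p\<in>A. \<Sum>q\<in>A. f p q) * (\<Sum>r\<in>B. \<Sum>s\<in>B. g r s)"
proof -
  have "(\<Sum>p\<in>A. \<Sum>r\<in>B. \<Sum>q\<in>A. \<Sum>s\<in>B. f p q * g r s)
      = (\<Sum>p\<in>A. \<Sum>q\<in>A. \<Sum>r\<in>B. \<Sum>s\<in>B. f p q * g r s)"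
    by (intro sum.cong refl sum.swap)
  also have "\<dots> = (\<Sum>p\<in>A. \<Sum>q\<in>A. f p q * (\<Sum>r\<in>B. \<Sum>s\<in>B. g r s))"
    by (simp only: sum_distrib_left)
  also have "\<dots> = (\<Sum>p\<in>A. \<Sum>q\<in>A. f p q) * (\<Sum>r\<in>B. \<Sum>s\<in>B. g r s)"
    by (simp only: sum_distrib_right)
  finally show ?thesis .
qed

lemma block_index_cases:
  fixes i m :: nat
  assumes "i < k * m"
  obtains p r where "i = p * m + r" "p < k" "r < m"
proof
  show "i = i div m * m + i mod m" by simp
  show "i div m < k" using assms by (simp add: less_mult_imp_div_less)
  show "i mod m < m" using assms by (cases "m = 0") auto
qed

lemma block_index_eq_iff:
  fixes m :: nat
  assumes "r < m" "s < m"
  shows "p * m + r = q * m + s \<longleftrightarrow> p = q \<and> r = s"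
proof
  assume eq: "p * m + r = q * m + s"
  have "m \<noteq> 0"
    using assms by simp
  then have "p = q"
    using arg_cong[OF eq, of "\<lambda>i. i div m"] assms by simp
  with eq show "p = q \<and> r = s"
    by simp
qed simp

lemma pauli_string_Cons: "pauli_string (a # xs) = kron (pauli a) (pauli_string xs)"
  by (simp add: pauli_string_def)

lemma dim_pauli_string [simp]:
  "dim_row (pauli_string xs) = 2 ^ length xs" "dim_col (pauli_string xs) = 2 ^ length xs"
  by (induction xs) (simp_all add: pauli_string_Cons kron_def pauli_string_def[of "[]"])

lemma pauli_string_carrier: "pauli_string xs \<in> carrier_mat (2 ^ length xs) (2 ^ length xs)"
  by (rule carrier_matI) simp_all

lemma pauli_string_Nil_index: "pauli_string [] $$ (0,0) = 1"
  by (simp add: pauli_string_def)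

lemma pauli_string_Cons_block_index:
  assumes "r < 2 ^ length xs" "s < 2 ^ length xs" "p < 2" "q < 2"
  shows "pauli_string (a # xs) $$ (p * 2 ^ length xs + r, q * 2 ^ length xs + s) =
    pauli a $$ (p, q) * pauli_string xs $$ (r, s)"
proof -
  have "p * 2 ^ length xs + r < 2 * 2 ^ length xs" "q * 2 ^ length xs + s < 2 * 2 ^ length xs"
    using assms by (auto simp: less_2_cases_iff)
  then show ?thesis
    using assms by (simp add: pauli_string_Cons kron_def)
qed

lemma pauli_string_hermitian:
  "i < 2 ^ length xs \<Longrightarrow> j < 2 ^ length xs \<Longrightarrow>
   cnj (pauli_string xs $$ (j,i)) = pauli_string xs $$ (i,j)"
proof (induction xs arbitrary: i j)
  case Nil
  then show ?case by (simp add: pauli_string_Nil_index)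
next
  case (Cons a xs)
  obtain p r where i: "i = p * 2 ^ length xs + r" "p < 2" "r < 2 ^ length xs"
    using Cons.prems(1) by (auto elim: block_index_cases)
  obtain q s where j: "j = q * 2 ^ length xs + s" "q < 2" "s < 2 ^ length xs"
    using Cons.prems(2) by (auto elim: block_index_cases)
  show ?case
    unfolding i(1) j(1) using i j
    by (simp add: pauli_string_Cons_block_index pauli_hermitian Cons.IH)
qed

lemma pauli_string_involutive:
  "i < 2 ^ length xs \<Longrightarrow> k < 2 ^ length xs \<Longrightarrow>
   (\<Sum>j<2 ^ length xs. pauli_string xs $$ (i,j) * pauli_string xs $$ (j,k)) = (if i = k then 1 else 0)"
proof (induction xs arbitrary: i k)
  case Nil
  then show ?case by (simp add: pauli_string_Nil_index)
next
  case (Cons a xs)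
  define m :: nat where "m = 2 ^ length xs"
  let ?P = "pauli_string xs"
  obtain p r where i: "i = p * m + r" "p < 2" "r < m"
    using Cons.prems(1) by (auto simp: m_def elim: block_index_cases)
  obtain q s where k: "k = q * m + s" "q < 2" "s < m"
    using Cons.prems(2) by (auto simp: m_def elim: block_index_cases)
  have "(\<Sum>j<2 ^ length (a # xs). pauli_string (a # xs) $$ (i,j) * pauli_string (a # xs) $$ (j,k))
      = (\<Sum>t<2. \<Sum>u<m. pauli a $$ (p, t) * pauli a $$ (t, q) * (?P $$ (r, u) * ?P $$ (u, s)))"
    unfolding sum_lessThan_mult length_Cons power_Suc m_def[symmetric] i(1) k(1)
    using i k by (intro sum.cong refl) (simp add: m_def pauli_string_Cons_block_index mult_ac)
  also have "\<dots> = (\<Sum>t<2. pauli a $$ (p, t) * pauli a $$ (t, q)) * (\<Sum>u<m. ?P $$ (r, u) * ?P $$ (u, s))"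
    by (simp add: sum_product)
  also have "\<dots> = (if i = k then 1 else 0)"
    using i k by (simp add: pauli_involutive Cons.IH m_def block_index_eq_iff)
  finally show ?case .
qed

lemma pauli_string_replicate_0_index:
  "i < 2 ^ n \<Longrightarrow> j < 2 ^ n \<Longrightarrow> pauli_string (replicate n 0) $$ (i,j) = (if i = j then 1 else 0)"
proof (induction n arbitrary: i j)
  case 0
  then show ?case by (simp add: pauli_string_Nil_index)
next
  case (Suc n)
  obtain p r where i: "i = p * 2 ^ n + r" "p < 2" "r < 2 ^ n"
    using Suc.prems(1) by (auto elim: block_index_cases)
  obtain q s where j: "j = q * 2 ^ n + s" "q < 2" "s < 2 ^ n"
    using Suc.prems(2) by (auto elim: block_index_cases)
  show ?case
    unfolding i(1) j(1) using i j pauli_string_Cons_block_index[of r "replicate n 0" s p q 0]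
    by (simp add: pauli_0_index Suc.IH block_index_eq_iff)
qed

lemma orthonormal_cols_pauli_string: "orthonormal_cols (2 ^ length xs) (pauli_string xs)"
  unfolding orthonormal_cols_def
proof (intro allI impI)
  fix k l :: nat assume kl: "k < 2 ^ length xs" "l < 2 ^ length xs"
  then have "(\<Sum>i<2 ^ length xs. cnj (pauli_string xs $$ (i,k)) * pauli_string xs $$ (i,l))
      = (\<Sum>i<2 ^ length xs. pauli_string xs $$ (k,i) * pauli_string xs $$ (i,l))"
    by (intro sum.cong refl) (simp add: pauli_string_hermitian)
  also have "\<dots> = (if k = l then 1 else 0)"
    using kl by (rule pauli_string_involutive)
  finally show "(\<Sum>i<2 ^ length xs. cnj (pauli_string xs $$ (i,k)) * pauli_string xs $$ (i,l))
      = (if k = l then 1 else 0)" .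
qed

definition pauli_labels :: "nat \<Rightarrow> nat list set" where
  "pauli_labels n = {xs. length xs = n \<and> set xs \<subseteq> {0..<4}}"

lemma finite_pauli_labels: "finite (pauli_labels n)"
  using finite_lists_length_eq[of "{0..<4::nat}" n] by (simp add: pauli_labels_def conj_commute)

lemma replicate_0_in_pauli_labels: "replicate n 0 \<in> pauli_labels n"
  by (auto simp: pauli_labels_def)

lemma pauli_labels_0: "pauli_labels 0 = {[]}"
  by (auto simp: pauli_labels_def)

lemma sum_pauli_labels_Suc:
  "(\<Sum>xs\<in>pauli_labels (Suc n). f xs) = (\<Sum>a<4. \<Sum>xs\<in>pauli_labels n. f (a # xs))"
proof -
  have "pauli_labels (Suc n) = (\<lambda>(a,xs). a # xs) ` ({..<4} \<times> pauli_labels n)"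
  proof
    show "pauli_labels (Suc n) \<subseteq> (\<lambda>(a,xs). a # xs) ` ({..<4} \<times> pauli_labels n)"
    proof
      fix ys assume "ys \<in> pauli_labels (Suc n)"
      then obtain a xs where "ys = a # xs" "a < 4" "xs \<in> pauli_labels n"
        by (cases ys) (auto simp: pauli_labels_def)
      then show "ys \<in> (\<lambda>(a,xs). a # xs) ` ({..<4} \<times> pauli_labels n)"
        by force
    qed
  qed (auto simp: pauli_labels_def)
  moreover have "inj_on (\<lambda>(a,xs). a # xs) ({..<4::nat} \<times> pauli_labels n)"
    by (auto simp: inj_on_def)
  ultimately show ?thesis
    by (simp add: sum.reindex sum.cartesian_product split_def)
qed

lemma pauli_string_completeness:
  assumes "i < 2 ^ n" "j < 2 ^ n" "k < 2 ^ n" "l < 2 ^ n"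
  shows "(\<Sum>xs\<in>pauli_labels n. pauli_string xs $$ (i,j) * pauli_string xs $$ (k,l))
    = (if i = l \<and> j = k then 2 ^ n else 0)"
  using assms
proof (induction n arbitrary: i j k l)
  case 0
  then show ?case by (simp add: pauli_labels_0 pauli_string_Nil_index)
next
  case (Suc n)
  define m :: nat where "m = 2 ^ n"
  obtain p r where i: "i = p * m + r" "p < 2" "r < m"
    using Suc.prems(1) by (auto simp: m_def elim: block_index_cases)
  obtain q s where j: "j = q * m + s" "q < 2" "s < m"
    using Suc.prems(2) by (auto simp: m_def elim: block_index_cases)
  obtain p' r' where k: "k = p' * m + r'" "p' < 2" "r' < m"
    using Suc.prems(3) by (auto simp: m_def elim: block_index_cases)
  obtain q' s' where l: "l = q' * m + s'" "q' < 2" "s' < m"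
    using Suc.prems(4) by (auto simp: m_def elim: block_index_cases)
  have "(\<Sum>xs\<in>pauli_labels (Suc n). pauli_string xs $$ (i,j) * pauli_string xs $$ (k,l))
      = (\<Sum>a<4. \<Sum>xs\<in>pauli_labels n. (pauli a $$ (p,q) * pauli a $$ (p',q')) *
          (pauli_string xs $$ (r,s) * pauli_string xs $$ (r',s')))"
    unfolding sum_pauli_labels_Suc i(1) j(1) k(1) l(1) using i j k l
    by (intro sum.cong refl) (auto simp: m_def pauli_labels_def pauli_string_Cons_block_index)
  also have "\<dots> = (\<Sum>a<4. pauli a $$ (p,q) * pauli a $$ (p',q')) *
      (\<Sum>xs\<in>pauli_labels n. pauli_string xs $$ (r,s) * pauli_string xs $$ (r',s'))"
    by (rule sum_product[symmetric])
  also have "\<dots> = (if i = l \<and> j = k then 2 ^ Suc n else 0)"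
    using i j k l by (simp add: pauli_completeness Suc.IH m_def block_index_eq_iff)
  finally show ?case .
qed

lemma pauli_string_trace_orthogonal:
  assumes "length ys = length xs" "set xs \<subseteq> {0..<4}" "set ys \<subseteq> {0..<4}"
  shows "(\<Sum>i<2 ^ length xs. \<Sum>j<2 ^ length xs. pauli_string xs $$ (j,i) * pauli_string ys $$ (i,j))
    = (if xs = ys then 2 ^ length xs else 0)"
  using assms
proof (induction xs arbitrary: ys)
  case Nil
  then show ?case by (simp add: pauli_string_Nil_index)
next
  case (Cons a xs)
  obtain b ys' where ys: "ys = b # ys'" "length ys' = length xs"
    using Cons.prems(1) by (cases ys) auto
  define m :: nat where "m = 2 ^ length xs"
  let ?P = "pauli_string xs" and ?Q = "pauli_string ys'"
  have ys_index: "pauli_string ys $$ (p * m + r, q * m + s) = pauli b $$ (p,q) * ?Q $$ (r,s)"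
    if "r < m" "s < m" "p < 2" "q < 2" for p q r s
    using that pauli_string_Cons_block_index[of r ys' s p q b] ys by (simp add: m_def)
  have "(\<Sum>i<2 ^ length (a # xs). \<Sum>j<2 ^ length (a # xs).
          pauli_string (a # xs) $$ (j,i) * pauli_string ys $$ (i,j))
      = (\<Sum>p<2. \<Sum>r<m. \<Sum>q<2. \<Sum>s<m. pauli a $$ (q,p) * pauli b $$ (p,q) * (?P $$ (s,r) * ?Q $$ (r,s)))"
    unfolding sum_lessThan_mult length_Cons power_Suc m_def[symmetric]
    by (intro sum.cong refl)
      (simp add: pauli_string_Cons_block_index[of _ xs, folded m_def] ys_index mult_ac)
  also have "\<dots> = (\<Sum>p<2. \<Sum>q<2. pauli a $$ (q,p) * pauli b $$ (p,q)) * (\<Sum>r<m. \<Sum>s<m. ?P $$ (s,r) * ?Q $$ (r,s))"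
    by (rule sum_interleaved_product)
  also have "\<dots> = (if a = b then 2 else 0) * (if xs = ys' then 2 ^ length xs else 0)"
  proof -
    have labels: "a < 4" "b < 4" "set xs \<subseteq> {0..<4}" "set ys' \<subseteq> {0..<4}"
      using Cons.prems ys(1) by auto
    have "(\<Sum>r<m. \<Sum>s<m. ?P $$ (s,r) * ?Q $$ (r,s)) = (if xs = ys' then 2 ^ length xs else 0)"
      unfolding m_def using ys(2) labels(3,4) by (rule Cons.IH)
    then show ?thesis
      by (simp only: pauli_trace_orthogonal[OF labels(1,2)])
  qed
  also have "\<dots> = (if a # xs = ys then 2 ^ length (a # xs) else 0)"
    using ys(1) by simp
  finally show ?case .
qed

lemma paulis_eq_image: "paulis n = pauli_string ` pauli_labels n"
  by (auto simp: paulis_def pauli_labels_def)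

lemma inj_on_pauli_string: "inj_on pauli_string (pauli_labels n)"
proof (rule inj_onI)
  fix xs ys assume xs: "xs \<in> pauli_labels n" and ys: "ys \<in> pauli_labels n"
    and eq: "pauli_string xs = pauli_string ys"
  have "(\<Sum>i<2 ^ length xs. \<Sum>j<2 ^ length xs. pauli_string ys $$ (j,i) * pauli_string xs $$ (i,j))
      = 2 ^ length xs"
    using pauli_string_trace_orthogonal[of xs xs] xs by (simp add: eq pauli_labels_def)
  then show "xs = ys"
    using pauli_string_trace_orthogonal[of xs ys] xs ys by (auto simp: pauli_labels_def split: if_splits)
qed

lemma sum_paulis: "(\<Sum>P\<in>paulis n. f P) = (\<Sum>xs\<in>pauli_labels n. f (pauli_string xs))"
  unfolding paulis_eq_image by (rule sum.reindex[OF inj_on_pauli_string, unfolded comp_def])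

section \<open>The Pauli spectrum of a pure state\<close>

lemma expval_pauli_string_real:
  "expval (2 ^ length xs) (pauli_string xs) x = of_real (Re (expval (2 ^ length xs) (pauli_string xs) x))"
  using cnj_expval[of "2 ^ length xs" "pauli_string xs" x] pauli_string_hermitian[of _ xs]
  by (metis Reals_cnj_iff of_real_Re)

lemma expval_replicate_0:
  "expval (2 ^ n) (pauli_string (replicate n 0)) x = cinner (2 ^ n) x x"
proof -
  have "expval (2 ^ n) (pauli_string (replicate n 0)) x
      = (\<Sum>i<2 ^ n. \<Sum>j<2 ^ n. cnj (x i) * x j * (if i = j then 1 else 0))"
    unfolding expval_eq_sum by (intro sum.cong refl) (simp add: pauli_string_replicate_0_index)
  then show ?thesis
    by (simp add: cinner_def if_distrib cong: if_cong)
qed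

lemma sum_pauli_string_mult_expval:
  assumes "i < 2 ^ n" "j < 2 ^ n"
  shows "(\<Sum>xs\<in>pauli_labels n. pauli_string xs $$ (i,j) * expval (2 ^ n) (pauli_string xs) v)
    = 2 ^ n * (v i * cnj (v j))"
proof -
  let ?P = pauli_string and ?L = "pauli_labels n"
  let ?f = "\<lambda>xs k l. cnj (v k) * v l * (?P xs $$ (i,j) * ?P xs $$ (k,l))"
  have "(\<Sum>xs\<in>?L. ?P xs $$ (i,j) * expval (2 ^ n) (?P xs) v) = (\<Sum>xs\<in>?L. \<Sum>k<2 ^ n. \<Sum>l<2 ^ n. ?f xs k l)"
    by (simp add: expval_eq_sum sum_distrib_left mult_ac)
  also have "\<dots> = (\<Sum>k<2 ^ n. \<Sum>l<2 ^ n. \<Sum>xs\<in>?L. ?f xs k l)"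
    by (simp only: sum.swap[of _ ?L])
  also have "\<dots> = (\<Sum>k<2 ^ n. \<Sum>l<2 ^ n.
      if l = i then if k = j then cnj (v k) * v l * 2 ^ n else 0 else 0)"
    using assms
    by (intro sum.cong refl) (auto simp: pauli_string_completeness simp flip: sum_distrib_left)
  also have "\<dots> = 2 ^ n * (v i * cnj (v j))"
    using assms by (simp add: mult_ac)
  finally show ?thesis .
qed

lemma sum_expval_pauli_strings:
  "(\<Sum>xs\<in>pauli_labels n. expval (2 ^ n) (pauli_string xs) w * expval (2 ^ n) (pauli_string xs) v)
    = 2 ^ n * (cinner (2 ^ n) w v * cinner (2 ^ n) v w)"
proof -
  let ?P = pauli_string and ?L = "pauli_labels n"
  let ?f = "\<lambda>xs i j. cnj (w i) * w j * (?P xs $$ (i,j) * expval (2 ^ n) (?P xs) v)"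
  have "(\<Sum>xs\<in>?L. expval (2 ^ n) (?P xs) w * expval (2 ^ n) (?P xs) v)
      = (\<Sum>xs\<in>?L. \<Sum>i<2 ^ n. \<Sum>j<2 ^ n. ?f xs i j)"
    by (simp add: expval_eq_sum[of _ _ w] sum_distrib_left sum_distrib_right mult_ac)
  also have "\<dots> = (\<Sum>i<2 ^ n. \<Sum>j<2 ^ n. \<Sum>xs\<in>?L. ?f xs i j)"
    by (simp only: sum.swap[of _ ?L])
  also have "\<dots> = (\<Sum>i<2 ^ n. \<Sum>j<2 ^ n. 2 ^ n * ((cnj (w i) * v i) * (cnj (v j) * w j)))"
    by (intro sum.cong refl)
      (simp add: sum_pauli_string_mult_expval mult_ac flip: sum_distrib_left)
  also have "\<dots> = 2 ^ n * (\<Sum>i<2 ^ n. \<Sum>j<2 ^ n. (cnj (w i) * v i) * (cnj (v j) * w j))"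
    by (simp only: sum_distrib_left)
  also have "\<dots> = 2 ^ n * (cinner (2 ^ n) w v * cinner (2 ^ n) v w)"
    by (simp only: cinner_def sum_product)
  finally show ?thesis .
qed

lemma sum_expval_pauli_strings_Re:
  "(\<Sum>xs\<in>pauli_labels n. Re (expval (2 ^ n) (pauli_string xs) w) * Re (expval (2 ^ n) (pauli_string xs) v))
    = 2 ^ n * (cmod (cinner (2 ^ n) w v))\<^sup>2"
proof -
  have "(\<Sum>xs\<in>pauli_labels n. Re (expval (2 ^ n) (pauli_string xs) w) * Re (expval (2 ^ n) (pauli_string xs) v))
      = Re (\<Sum>xs\<in>pauli_labels n. expval (2 ^ n) (pauli_string xs) w * expval (2 ^ n) (pauli_string xs) v)"
    unfolding Re_sum
  proof (intro sum.cong refl)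
    fix xs assume "xs \<in> pauli_labels n"
    then have "length xs = n" by (simp add: pauli_labels_def)
    then show "Re (expval (2 ^ n) (pauli_string xs) w) * Re (expval (2 ^ n) (pauli_string xs) v)
        = Re (expval (2 ^ n) (pauli_string xs) w * expval (2 ^ n) (pauli_string xs) v)"
      using expval_pauli_string_real[of xs w] expval_pauli_string_real[of xs v]
      by (metis Re_complex_of_real of_real_mult)
  qed
  also have "\<dots> = Re (complex_of_real (2 ^ n * (cmod (cinner (2 ^ n) w v))\<^sup>2))"
  proof -
    have "cinner (2 ^ n) w v * cinner (2 ^ n) v w = complex_of_real ((cmod (cinner (2 ^ n) w v))\<^sup>2)"
      using complex_norm_square[of "cinner (2 ^ n) w v"] cnj_cinner[of "2 ^ n" w v] by simp
    then show ?thesis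
      by (simp add: sum_expval_pauli_strings)
  qed
  also have "\<dots> = 2 ^ n * (cmod (cinner (2 ^ n) w v))\<^sup>2"
    by (rule Re_complex_of_real)
  finally show ?thesis .
qed

lemma abs_Re_expval_pauli_string_le:
  assumes "xs \<in> pauli_labels n" "vnorm (2 ^ n) y = 1"
  shows "\<bar>Re (expval (2 ^ n) (pauli_string xs) y)\<bar> \<le> 1"
  using assms abs_Re_le_cmod[of "expval (2 ^ n) (pauli_string xs) y"]
    cmod_expval_le[OF orthonormal_cols_pauli_string, of xs y]
  by (simp add: pauli_labels_def)

lemma Re_expval_replicate_0:
  assumes "vnorm (2 ^ n) y = 1"
  shows "Re (expval (2 ^ n) (pauli_string (replicate n 0)) y) = 1"
  using assms by (simp add: expval_replicate_0 cinner_self)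

lemma sum_Re_expval_pauli_string_sq:
  assumes "vnorm (2 ^ n) y = 1"
  shows "(\<Sum>xs\<in>pauli_labels n. (Re (expval (2 ^ n) (pauli_string xs) y))\<^sup>2) = 2 ^ n"
  using sum_expval_pauli_strings_Re[of n y y] assms by (simp add: cinner_self power2_eq_square)

lemma sum_Re_expval_diff_sq_le:
  assumes w: "vnorm (2 ^ n) w = 1" and v: "vnorm (2 ^ n) v = 1"
  shows "(\<Sum>xs\<in>pauli_labels n.
      (Re (expval (2 ^ n) (pauli_string xs) w) - Re (expval (2 ^ n) (pauli_string xs) v))\<^sup>2)
    \<le> 2 * 2 ^ n * (vnorm (2 ^ n) (w - v))\<^sup>2"
proof -
  define A where "A xs = Re (expval (2 ^ n) (pauli_string xs) w)" for xs
  define B where "B xs = Re (expval (2 ^ n) (pauli_string xs) v)" for xs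
  have "(\<Sum>xs\<in>pauli_labels n. (A xs - B xs)\<^sup>2)
      = (\<Sum>xs\<in>pauli_labels n. (A xs)\<^sup>2) + (\<Sum>xs\<in>pauli_labels n. (B xs)\<^sup>2)
        - 2 * (\<Sum>xs\<in>pauli_labels n. A xs * B xs)"
    by (simp add: power2_diff sum.distrib sum_subtractf sum_distrib_left mult.assoc)
  also have "\<dots> = 2 * 2 ^ n * (1 - (cmod (cinner (2 ^ n) w v))\<^sup>2)"
    unfolding A_def B_def sum_Re_expval_pauli_string_sq[OF w] sum_Re_expval_pauli_string_sq[OF v]
      sum_expval_pauli_strings_Re
    by (simp add: algebra_simps)
  also have "\<dots> \<le> 2 * 2 ^ n * (vnorm (2 ^ n) (w - v))\<^sup>2"
    using one_minus_cmod_cinner_sq_le[OF w v] by simp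
  finally show ?thesis
    unfolding A_def B_def .
qed

lemma M_lin_state_proj:
  "M_lin_state n (proj (2 ^ n) x)
    = 1 - 1 / 2 ^ n * (\<Sum>xs\<in>pauli_labels n. (Re (expval (2 ^ n) (pauli_string xs) x)) ^ 4)"
proof -
  have "mtrace (pauli_string xs * proj (2 ^ n) x) = expval (2 ^ n) (pauli_string xs) x"
    if "xs \<in> pauli_labels n" for xs
    using that pauli_string_carrier[of xs] by (intro mtrace_mult_proj) (simp add: pauli_labels_def)
  then show ?thesis
    by (simp add: M_lin_state_def sum_paulis cong: sum.cong)
qed

section \<open>Lipschitz bounds\<close>

lemma sq_sum_mul_sum_sq_minus_one_le:
  fixes a b :: real
  assumes "\<bar>a\<bar> \<le> 1" "\<bar>b\<bar> \<le> 1"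
  shows "((a + b) * (a\<^sup>2 + b\<^sup>2 - 1))\<^sup>2 \<le> 2 * (a\<^sup>2 + b\<^sup>2)"
proof -
  have "a\<^sup>2 \<le> 1" "b\<^sup>2 \<le> 1"
    using assms by (simp_all add: abs_square_le_1)
  then have "\<bar>a\<^sup>2 + b\<^sup>2 - 1\<bar> \<le> 1"
    using zero_le_power2[of a] zero_le_power2[of b] by (simp add: abs_le_iff)
  then have "(a\<^sup>2 + b\<^sup>2 - 1)\<^sup>2 \<le> 1"
    by (simp add: abs_square_le_1)
  then have "((a + b) * (a\<^sup>2 + b\<^sup>2 - 1))\<^sup>2 \<le> (a + b)\<^sup>2"
    by (simp add: power_mult_distrib mult_left_le)
  also have "\<dots> \<le> 2 * (a\<^sup>2 + b\<^sup>2)"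
    using sum_squares_bound[of a b] by (simp add: power2_sum)
  finally show ?thesis .
qed

lemma sum_power4_diff_sq_le:
  fixes A B :: "'a \<Rightarrow> real"
  assumes S: "finite S" "e \<in> S" and one: "A e = 1" "B e = 1"
    and bounded: "\<And>x. x \<in> S \<Longrightarrow> \<bar>A x\<bar> \<le> 1" "\<And>x. x \<in> S \<Longrightarrow> \<bar>B x\<bar> \<le> 1"
    and sum_sq: "(\<Sum>x\<in>S. (A x)\<^sup>2) = D" "(\<Sum>x\<in>S. (B x)\<^sup>2) = D"
  shows "((\<Sum>x\<in>S. (A x)^4) - (\<Sum>x\<in>S. (B x)^4))\<^sup>2 \<le> 4 * (D - 1) * (\<Sum>x\<in>S. (A x - B x)\<^sup>2)"
proof -
  define Y where "Y x = (A x + B x) * ((A x)\<^sup>2 + (B x)\<^sup>2 - 1)" for x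
  have "(A x)^4 - (B x)^4 = (A x - B x) * Y x + ((A x)\<^sup>2 - (B x)\<^sup>2)" for x
    unfolding Y_def by (simp add: power2_eq_square power4_eq_xxxx algebra_simps)
  then have "(\<Sum>x\<in>S. (A x)^4) - (\<Sum>x\<in>S. (B x)^4)
      = (\<Sum>x\<in>S. (A x - B x) * Y x) + ((\<Sum>x\<in>S. (A x)\<^sup>2) - (\<Sum>x\<in>S. (B x)\<^sup>2))"
    by (simp add: sum.distrib sum_subtractf flip: sum_subtractf)
  also have "\<dots> = (\<Sum>x\<in>S. (A x - B x) * Y x)"
    using sum_sq by simp
  also have "\<dots> = (\<Sum>x\<in>S - {e}. (A x - B x) * Y x)"
    using sum.remove[OF S, of "\<lambda>x. (A x - B x) * Y x"] one by simp
  finally have "((\<Sum>x\<in>S. (A x)^4) - (\<Sum>x\<in>S. (B x)^4))\<^sup>2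
      \<le> (\<Sum>x\<in>S - {e}. (A x - B x)\<^sup>2) * (\<Sum>x\<in>S - {e}. (Y x)\<^sup>2)"
    by (simp add: Cauchy_Schwarz_ineq_sum)
  also have "\<dots> \<le> (\<Sum>x\<in>S. (A x - B x)\<^sup>2) * (4 * (D - 1))"
  proof (rule mult_mono)
    show "(\<Sum>x\<in>S - {e}. (A x - B x)\<^sup>2) \<le> (\<Sum>x\<in>S. (A x - B x)\<^sup>2)"
      using S by (intro sum_mono2) auto
    have "(\<Sum>x\<in>S - {e}. (Y x)\<^sup>2) \<le> (\<Sum>x\<in>S - {e}. 2 * ((A x)\<^sup>2 + (B x)\<^sup>2))"
      unfolding Y_def using bounded by (intro sum_mono sq_sum_mul_sum_sq_minus_one_le) auto
    also have "\<dots> = 4 * (D - 1)"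
      using sum.remove[OF S, of "\<lambda>x. (A x)\<^sup>2 + (B x)\<^sup>2"] one sum_sq
      by (simp add: sum.distrib sum_distrib_left[symmetric])
    finally show "(\<Sum>x\<in>S - {e}. (Y x)\<^sup>2) \<le> 4 * (D - 1)" .
  qed (auto intro: sum_nonneg)
  finally show ?thesis
    by (simp add: mult_ac)
qed

lemma sqrt_8_pred_div_le:
  fixes D :: real
  assumes "2 \<le> D"
  shows "sqrt (8 * (D - 1) / D) \<le> 8 * D / (4 + D)"
proof -
  have "D * D * 1 \<le> D * D * (D - 1)"
    using assms by (intro mult_left_mono) auto
  moreover have "2 * D \<le> D * D"
    using assms by (intro mult_right_mono) auto
  moreover have "8 * (D - 1) * (4 + D)\<^sup>2 = 8 * (D * D * D) + 56 * (D * D) + 64 * D - 128"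
    by (simp add: power2_eq_square algebra_simps)
  moreover have "(8 * D)\<^sup>2 * D = 64 * (D * D * D)"
    by (simp add: power2_eq_square algebra_simps)
  ultimately have "8 * (D - 1) * (4 + D)\<^sup>2 \<le> (8 * D)\<^sup>2 * D"
    using assms by (simp only: right_diff_distrib mult_1_right)
  then have "8 * (D - 1) / D \<le> (8 * D / (4 + D))\<^sup>2"
    using assms by (simp add: power_divide divide_le_eq le_divide_eq mult_ac)
  then have "sqrt (8 * (D - 1) / D) \<le> sqrt ((8 * D / (4 + D))\<^sup>2)"
    by (rule real_sqrt_le_mono)
  then show ?thesis
    using assms by simp
qed

lemma M_lin_state_proj_diff_le:
  assumes w: "vnorm (2 ^ n) w = 1" and v: "vnorm (2 ^ n) v = 1"
  shows "\<bar>M_lin_state n (proj (2 ^ n) w) - M_lin_state n (proj (2 ^ n) v)\<bar>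
    \<le> sqrt (8 * (2 ^ n - 1) / 2 ^ n) * vnorm (2 ^ n) (w - v)"
proof -
  define D :: real where "D = 2 ^ n"
  define A where "A xs = Re (expval (2 ^ n) (pauli_string xs) w)" for xs
  define B where "B xs = Re (expval (2 ^ n) (pauli_string xs) v)" for xs
  define \<delta> where "\<delta> = vnorm (2 ^ n) (w - v)"
  have D1: "1 \<le> D"
    by (simp add: D_def)
  have "((\<Sum>xs\<in>pauli_labels n. (A xs)^4) - (\<Sum>xs\<in>pauli_labels n. (B xs)^4))\<^sup>2
      \<le> 4 * (D - 1) * (\<Sum>xs\<in>pauli_labels n. (A xs - B xs)\<^sup>2)"
    unfolding A_def B_def D_def
    by (rule sum_power4_diff_sq_le[OF finite_pauli_labels replicate_0_in_pauli_labels
          Re_expval_replicate_0[OF w] Re_expval_replicate_0[OF v]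
          abs_Re_expval_pauli_string_le[OF _ w] abs_Re_expval_pauli_string_le[OF _ v]
          sum_Re_expval_pauli_string_sq[OF w] sum_Re_expval_pauli_string_sq[OF v]])
  also have "\<dots> \<le> 4 * (D - 1) * (2 * D * \<delta>\<^sup>2)"
    using sum_Re_expval_diff_sq_le[OF w v] D1 unfolding A_def B_def D_def \<delta>_def
    by (intro mult_left_mono) auto
  finally have diff_sq: "((\<Sum>xs\<in>pauli_labels n. (A xs)^4) - (\<Sum>xs\<in>pauli_labels n. (B xs)^4))\<^sup>2
      \<le> 8 * D * (D - 1) * \<delta>\<^sup>2"
    by (simp add: algebra_simps)
  have "M_lin_state n (proj (2 ^ n) w) - M_lin_state n (proj (2 ^ n) v)
      = - ((\<Sum>xs\<in>pauli_labels n. (A xs)^4) - (\<Sum>xs\<in>pauli_labels n. (B xs)^4)) / D"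
    by (simp add: M_lin_state_proj A_def B_def D_def diff_divide_distrib)
  then have "\<bar>M_lin_state n (proj (2 ^ n) w) - M_lin_state n (proj (2 ^ n) v)\<bar>\<^sup>2
      = ((\<Sum>xs\<in>pauli_labels n. (A xs)^4) - (\<Sum>xs\<in>pauli_labels n. (B xs)^4))\<^sup>2 / D\<^sup>2"
    by (simp add: power_divide power2_commute)
  also have "\<dots> \<le> 8 * D * (D - 1) * \<delta>\<^sup>2 / D\<^sup>2"
    using diff_sq by (rule divide_right_mono) simp
  also have "\<dots> = 8 * (D - 1) / D * \<delta>\<^sup>2"
    using D1 by (simp add: power2_eq_square)
  also have "\<dots> = (sqrt (8 * (D - 1) / D) * \<delta>)\<^sup>2"
    using D1 by (simp add: power_mult_distrib)
  finally show ?thesis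
    unfolding D_def \<delta>_def by (rule power2_le_imp_le) (simp add: vnorm_nonneg)
qed

lemma M_lin_state_conj_diff_le:
  assumes U: "unitary_mat (2 ^ n) U" and V: "unitary_mat (2 ^ n) V" and u: "vnorm (2 ^ n) u = 1"
  shows "\<bar>M_lin_state n (U * proj (2 ^ n) u * dagger U) - M_lin_state n (V * proj (2 ^ n) u * dagger V)\<bar>
    \<le> sqrt (8 * (2 ^ n - 1) / 2 ^ n) * frob_norm (U - V)"
proof -
  have carrier: "U \<in> carrier_mat (2 ^ n) (2 ^ n)" "V \<in> carrier_mat (2 ^ n) (2 ^ n)"
    using U V by (simp_all add: unitary_mat_def)
  have "\<bar>M_lin_state n (U * proj (2 ^ n) u * dagger U) - M_lin_state n (V * proj (2 ^ n) u * dagger V)\<bar>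
      \<le> sqrt (8 * (2 ^ n - 1) / 2 ^ n) * vnorm (2 ^ n) (mat_app (2 ^ n) U u - mat_app (2 ^ n) V u)"
    unfolding conj_proj[OF carrier(1)] conj_proj[OF carrier(2)]
    using u by (intro M_lin_state_proj_diff_le) (simp_all add: vnorm_mat_app unitary_mat_orthonormal_cols U V)
  also have "\<dots> \<le> sqrt (8 * (2 ^ n - 1) / 2 ^ n) * frob_norm (U - V)"
    using vnorm_mat_app_diff_le_frob_norm[OF carrier, of u] u by (intro mult_left_mono) simp_all
  finally show ?thesis .
qed

lemma zero_proj_eq_proj: "zero_proj n = proj (2 ^ n) (\<lambda>k. if k = 0 then 1 else 0)"
  by (auto simp: zero_proj_def proj_def)

lemma STAB_cases:
  assumes "\<rho> \<in> STAB n"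
  obtains u where "vnorm (2 ^ n) u = 1" "\<rho> = proj (2 ^ n) u"
proof -
  obtain C where C: "clifford n C" "\<rho> = C * zero_proj n * dagger C"
    using assms by (auto simp: STAB_def)
  then have unitary: "unitary_mat (2 ^ n) C"
    by (simp add: clifford_def)
  define e :: "nat \<Rightarrow> complex" where "e = (\<lambda>k. if k = 0 then 1 else 0)"
  have "(\<Sum>k<2 ^ n. (cmod (e k))\<^sup>2) = (\<Sum>k<(2::nat) ^ n. if k = 0 then 1 else (0::real))"
    by (intro sum.cong refl) (simp add: e_def)
  then have "vnorm (2 ^ n) e = 1"
    by (simp add: vnorm_def L2_set_def)
  then have "vnorm (2 ^ n) (mat_app (2 ^ n) C e) = 1"
    by (simp add: vnorm_mat_app unitary_mat_orthonormal_cols[OF unitary])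
  moreover have "\<rho> = proj (2 ^ n) (mat_app (2 ^ n) C e)"
    using unitary by (simp add: C(2) zero_proj_eq_proj e_def conj_proj unitary_mat_def)
  ultimately show ?thesis
    using that by blast
qed

lemma abs_diff_average_le:
  fixes f g :: "'a \<Rightarrow> real"
  assumes "\<And>x. x \<in> S \<Longrightarrow> \<bar>f x - g x\<bar> \<le> K" "0 \<le> K"
  shows "\<bar>(\<Sum>x\<in>S. f x) / card S - (\<Sum>x\<in>S. g x) / card S\<bar> \<le> K"
proof (cases "card S = 0")
  case True
  (* this includes an infinite S, for which both averages are 0 *)
  then show ?thesis using assms(2) by simp
next
  case False
  have "\<bar>(\<Sum>x\<in>S. f x) / card S - (\<Sum>x\<in>S. g x) / card S\<bar> = \<bar>\<Sum>x\<in>S. f x - g x\<bar> / card S"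
    by (simp add: sum_subtractf flip: diff_divide_distrib)
  also have "\<dots> \<le> (\<Sum>x\<in>S. \<bar>f x - g x\<bar>) / card S"
    by (intro divide_right_mono sum_abs) simp
  also have "\<dots> \<le> (\<Sum>x\<in>S. K) / card S"
    using assms(1) by (intro divide_right_mono sum_mono) simp_all
  also have "\<dots> = K"
    using False by simp
  finally show ?thesis .
qed

theorem mainTheorem10:
  fixes n :: nat and U V :: "complex mat"
  assumes "n \<ge> 1"
    and "unitary_mat (2^n) U" and "unitary_mat (2^n) V"
  shows "\<bar>M_lin n U - M_lin n V\<bar> \<le> (8 * 2^n / (4 + 2^n)) * frob_norm (U - V)"
proof -
  let ?K = "(8 * 2^n / (4 + 2^n)) * frob_norm (U - V) :: real"
  have "(2::real) \<le> 2 ^ n"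
    using assms(1) by (metis power_one_right power_increasing one_le_numeral)
  then have const: "sqrt (8 * (2 ^ n - 1) / 2 ^ n) \<le> 8 * 2 ^ n / (4 + 2 ^ n :: real)"
    by (rule sqrt_8_pred_div_le)
  have "\<bar>M_lin_state n (U * \<rho> * dagger U) - M_lin_state n (V * \<rho> * dagger V)\<bar> \<le> ?K"
    if "\<rho> \<in> STAB n" for \<rho>
  proof -
    obtain u where "vnorm (2 ^ n) u = 1" "\<rho> = proj (2 ^ n) u"
      using \<open>\<rho> \<in> STAB n\<close> by (rule STAB_cases)
    then show ?thesis
      using M_lin_state_conj_diff_le[OF assms(2,3)] const frob_norm_nonneg[of "U - V"]
      by (meson mult_right_mono order_trans)
  qed
  then show ?thesis
    unfolding M_lin_def by (intro abs_diff_average_le) (simp_all add: frob_norm_nonneg)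
qed

end
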